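(* For every Stone space $X$ the Heisenberg group $H_X=(\mathbb{Z}_2\oplus V)\rtimes V^{*}$ is a minimal and non-archimedean topological group.
   Context: A Stone space is a compact zero-dimensional Hausdorff space. $\mathbb{Z}_2$ is the discrete two-element group. $V=C(X,\mathbb{Z}_2)$ is the Boolean group of continuous maps $X\to\mathbb{Z}_2$ (equivalently, clopen subsets of $X$ under symmetric difference) with the discrete topology. $V^*=\mathrm{Hom}(V,\mathbb{Z}_2)$ is the group of all homomorphisms $V\to\mathbb{Z}_2$ with the topology of pointwise convergence (a compact subgroup of $\mathbb{Z}_2^V$). $H_X$ is the set $\mathbb{Z}_2\times V\times V^*$ with the product topology and multiplication $(a_1,x_1,f_1)(a_2,x_2,f_2)=(a_1+a_2+f_1(x_2),\,x_1+x_2,\,f_1+f_2)$. A Hausdorff topological group is minimal if it admits no strictly coarser Hausdorff group topology. A topological group is non-archimedean if it has a local base at the identity consisting of open subgroups. *)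

theory Defs
  imports "HOL-Analysis.Analysis" "HOL-Algebra.Group"
begin

text \<open>Z_2 is represented by bool, with addition = exclusive or (i.e. \<open>\<noteq>\<close>), 0 = False.\<close>

definition stone_space :: "'a topology \<Rightarrow> bool" where
  "stone_space X \<longleftrightarrow> compact_space X \<and> Hausdorff_space X \<and> X dim_le 0"

text \<open>V = C(X,Z_2), represented as the clopen subsets of X, group operation = symmetric difference.\<close>
definition clopens :: "'a topology \<Rightarrow> 'a set set" where
  "clopens X = {U. closedin X U \<and> openin X U}"

definition symdiff :: "'a set \<Rightarrow> 'a set \<Rightarrow> 'a set" where
  "symdiff A B = (A - B) \<union> (B - A)"

definition dual_hom :: "'a topology \<Rightarrow> ('a set \<Rightarrow> bool) set" where
  "dual_hom X = {f. f \<in> extensional (clopens X) \<and>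
      (\<forall>A\<in>clopens X. \<forall>B\<in>clopens X. f (symdiff A B) = (f A \<noteq> f B))}"

definition dual_topology :: "'a topology \<Rightarrow> ('a set \<Rightarrow> bool) topology" where
  "dual_topology X = subtopology (product_topology (\<lambda>_. discrete_topology (UNIV::bool set)) (clopens X)) (dual_hom X)"

definition heis_group :: "'a topology \<Rightarrow> (bool \<times> 'a set \<times> ('a set \<Rightarrow> bool)) monoid" where
  "heis_group X = \<lparr> carrier = UNIV \<times> clopens X \<times> dual_hom X,
     mult = (\<lambda>(a1, x1, f1) (a2, x2, f2).
               ((a1 \<noteq> a2) \<noteq> f1 x2, symdiff x1 x2, \<lambda>A\<in>clopens X. f1 A \<noteq> f2 A)),
     one = (False, {}, \<lambda>A\<in>clopens X. False) \<rparr>"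

definition heis_topology :: "'a topology \<Rightarrow> (bool \<times> 'a set \<times> ('a set \<Rightarrow> bool)) topology" where
  "heis_topology X = prod_topology (discrete_topology UNIV)
      (prod_topology (discrete_topology (clopens X)) (dual_topology X))"

definition group_topology :: "('g, 'b) monoid_scheme \<Rightarrow> 'g topology \<Rightarrow> bool" where
  "group_topology G T \<longleftrightarrow> group G \<and> topspace T = carrier G \<and>
     continuous_map (prod_topology T T) T (\<lambda>(x, y). x \<otimes>\<^bsub>G\<^esub> y) \<and>
     continuous_map T T (\<lambda>x. inv\<^bsub>G\<^esub> x)"

definition minimal_group :: "('g, 'b) monoid_scheme \<Rightarrow> 'g topology \<Rightarrow> bool" where
  "minimal_group G T \<longleftrightarrow> group_topology G T \<and> Hausdorff_space T \<and>
     (\<forall>T'. group_topology G T' \<and> Hausdorff_space T' \<and> (\<forall>U. openin T' U \<longrightarrow> openin T U)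
        \<longrightarrow> T' = T)"

definition non_archimedean_group :: "('g, 'b) monoid_scheme \<Rightarrow> 'g topology \<Rightarrow> bool" where
  "non_archimedean_group G T \<longleftrightarrow> group_topology G T \<and>
     (\<forall>U. openin T U \<and> \<one>\<^bsub>G\<^esub> \<in> U \<longrightarrow> (\<exists>H. subgroup H G \<and> openin T H \<and> H \<subseteq> U))"

end

theory Submission
  imports Defs
begin

text \<open>
  Non-archimedean: the subgroups \<open>{0} \<times> {0} \<times> K\<^sup>\<bottom>\<close>, where \<open>K\<^sup>\<bottom>\<close> consists of the characters
  vanishing on a finite set \<open>K \<subseteq> V\<close>, are open and form a neighbourhood base of the identity.

  Minimal: let \<open>T'\<close> be a coarser Hausdorff group topology. By continuity of commutators there is
  a \<open>T'\<close>-neighbourhood \<open>U\<close> of the identity on which all commutators \<open>(f y + g x, 0, 0)\<close> vanish,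
  i.e. \<open>f y = g x\<close>. Since \<open>U\<close> is also open in \<open>H\<^sub>X\<close>, it contains some \<open>{0} \<times> {0} \<times> K\<^sup>\<bottom>\<close>, and then
  every \<open>V\<close>-coordinate of \<open>U\<close> is killed by \<open>K\<^sup>\<bottom>\<close>, hence is a union of atoms of the finite Boolean
  algebra generated by \<open>K\<close>. So \<open>U\<close> lies in a compact slab \<open>\<int>\<^sub>2 \<times> F \<times> V\<^sup>*\<close> (\<open>V\<^sup>*\<close> is compact), and a
  general lemma on group topologies gives \<open>T' = T\<close>.
\<close>

lemma continuous_map_discrete_binop:
  assumes "continuous_map Z (discrete_topology A) p" "continuous_map Z (discrete_topology B) q"
    and "\<And>a b. a \<in> A \<Longrightarrow> b \<in> B \<Longrightarrow> h a b \<in> C"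
  shows "continuous_map Z (discrete_topology C) (\<lambda>z. h (p z) (q z))"
proof -
  have "continuous_map Z (discrete_topology (A \<times> B)) (\<lambda>z. (p z, q z))"
    using assms(1,2) by (simp add: prod_topology_discrete_topology continuous_map_pairedI)
  moreover have "continuous_map (discrete_topology (A \<times> B)) (discrete_topology C) (\<lambda>(a, b). h a b)"
    using assms(3) by auto
  ultimately have "continuous_map Z (discrete_topology C) ((\<lambda>(a, b). h a b) \<circ> (\<lambda>z. (p z, q z)))"
    by (rule continuous_map_compose)
  then show ?thesis
    by (simp add: o_def)
qed

lemma continuous_map_eval_discrete:
  "continuous_map (prod_topology (discrete_topology I) (product_topology (\<lambda>_. discrete_topology B) I))
     (discrete_topology B) (\<lambda>(i, f). f i)"
  (is "continuous_map ?D _ _")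
  unfolding continuous_map_def
proof (intro conjI allI impI)
  let ?P = "product_topology (\<lambda>_. discrete_topology B) I"
  show "(\<lambda>(i, f). f i) \<in> topspace ?D \<rightarrow> topspace (discrete_topology B)"
    by (auto simp: PiE_iff)
  fix W assume "openin (discrete_topology B) W"
  have eq: "{z \<in> topspace ?D. (case z of (i, f) \<Rightarrow> f i) \<in> W} = (\<Union>i\<in>I. {i} \<times> {f \<in> topspace ?P. f i \<in> W})"
    by auto
  have "openin ?P {f \<in> topspace ?P. f i \<in> W}" if "i \<in> I" for i
    using that \<open>openin (discrete_topology B) W\<close>
    by (intro openin_continuous_map_preimage[OF continuous_map_product_projection]) auto
  then have slice: "openin ?D ({i} \<times> {f \<in> topspace ?P. f i \<in> W})" if "i \<in> I" for i
    using that by (simp add: openin_prod_Times_iff)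
  show "openin ?D {z \<in> topspace ?D. (case z of (i, f) \<Rightarrow> f i) \<in> W}"
    unfolding eq by (intro openin_Union) (clarify, erule slice)
qed

lemma group_topology_mult_continuous:
  assumes "group_topology G T" "continuous_map Z T f" "continuous_map Z T g"
  shows "continuous_map Z T (\<lambda>z. f z \<otimes>\<^bsub>G\<^esub> g z)"
proof -
  have "continuous_map Z (prod_topology T T) (\<lambda>z. (f z, g z))"
    using assms(2,3) by (rule continuous_map_pairedI)
  then have "continuous_map Z T ((\<lambda>(x, y). x \<otimes>\<^bsub>G\<^esub> y) \<circ> (\<lambda>z. (f z, g z)))"
    using assms(1) unfolding group_topology_def by (blast intro: continuous_map_compose)
  then show ?thesis
    by (simp add: o_def)
qed

lemma group_topology_inv_continuous:
  assumes "group_topology G T" "continuous_map Z T f"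
  shows "continuous_map Z T (\<lambda>z. inv\<^bsub>G\<^esub> (f z))"
proof -
  have "continuous_map Z T ((\<lambda>x. inv\<^bsub>G\<^esub> x) \<circ> f)"
    using assms unfolding group_topology_def by (blast intro: continuous_map_compose)
  then show ?thesis
    by (simp add: o_def)
qed

lemma group_topology_translate_open:
  assumes T: "group_topology G T" and a: "a \<in> carrier G" and U: "openin T U"
  shows "openin T ((\<lambda>y. a \<otimes>\<^bsub>G\<^esub> y) ` U)"
proof -
  interpret group G
    using T by (simp add: group_topology_def)
  have tsp: "topspace T = carrier G"
    using T by (simp add: group_topology_def)
  have "continuous_map T T (\<lambda>y. inv\<^bsub>G\<^esub> a \<otimes>\<^bsub>G\<^esub> y)"
    using T a by (intro group_topology_mult_continuous) (auto simp: tsp)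
  then have "openin T {y \<in> topspace T. inv\<^bsub>G\<^esub> a \<otimes>\<^bsub>G\<^esub> y \<in> U}"
    using U by (rule openin_continuous_map_preimage)
  moreover have "(\<lambda>y. a \<otimes>\<^bsub>G\<^esub> y) ` U = {y \<in> topspace T. inv\<^bsub>G\<^esub> a \<otimes>\<^bsub>G\<^esub> y \<in> U}"
  proof (intro equalityI subsetI)
    have U_carrier: "U \<subseteq> carrier G"
      using openin_subset[OF U] tsp by simp
    fix y
    show "y \<in> {y \<in> topspace T. inv\<^bsub>G\<^esub> a \<otimes>\<^bsub>G\<^esub> y \<in> U}" if y: "y \<in> (\<lambda>y. a \<otimes>\<^bsub>G\<^esub> y) ` U"
    proof -
      obtain u where u: "u \<in> U" "y = a \<otimes>\<^bsub>G\<^esub> u"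
        using y by blast
      then have "u \<in> carrier G"
        using U_carrier by blast
      then show ?thesis
        using u a inv_solve_left'[of u a y] by (simp add: tsp)
    qed
    show "y \<in> (\<lambda>y. a \<otimes>\<^bsub>G\<^esub> y) ` U" if "y \<in> {y \<in> topspace T. inv\<^bsub>G\<^esub> a \<otimes>\<^bsub>G\<^esub> y \<in> U}"
    proof
      show "y = a \<otimes>\<^bsub>G\<^esub> (inv\<^bsub>G\<^esub> a \<otimes>\<^bsub>G\<^esub> y)"
        using that a inv_solve_left'[of "inv\<^bsub>G\<^esub> a \<otimes>\<^bsub>G\<^esub> y" a y] by (simp add: tsp)
    qed (use that in simp)
  qed
  ultimately show ?thesis
    by simp
qed

definition group_commutator :: "('g, 'b) monoid_scheme \<Rightarrow> 'g \<Rightarrow> 'g \<Rightarrow> 'g" where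
  "group_commutator G u v = u \<otimes>\<^bsub>G\<^esub> v \<otimes>\<^bsub>G\<^esub> inv\<^bsub>G\<^esub> u \<otimes>\<^bsub>G\<^esub> inv\<^bsub>G\<^esub> v"

lemma small_commutators:
  assumes T: "group_topology G T" and hT: "Hausdorff_space T"
    and z: "z \<in> carrier G" "z \<noteq> \<one>\<^bsub>G\<^esub>"
  obtains U where "openin T U" "\<one>\<^bsub>G\<^esub> \<in> U"
    "\<And>u v. u \<in> U \<Longrightarrow> v \<in> U \<Longrightarrow> group_commutator G u v \<noteq> z"
proof -
  let ?c = "\<lambda>P. group_commutator G (fst P) (snd P)"
  interpret group G
    using T by (simp add: group_topology_def)
  have tsp: "topspace T = carrier G"
    using T by (simp add: group_topology_def)
  have "t1_space T"
    using hT by (rule Hausdorff_imp_t1_space)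
  then have "\<exists>W. openin T W \<and> \<one>\<^bsub>G\<^esub> \<in> W \<and> z \<notin> W"
    using z one_closed unfolding t1_space_def tsp by metis
  then obtain W where W: "openin T W" "\<one>\<^bsub>G\<^esub> \<in> W" "z \<notin> W"
    by (elim exE conjE)
  have "continuous_map (prod_topology T T) T ?c"
    unfolding group_commutator_def by (intro group_topology_mult_continuous[OF T] group_topology_inv_continuous[OF T]
        continuous_map_fst continuous_map_snd)
  then have opP: "openin (prod_topology T T) {P \<in> topspace (prod_topology T T). ?c P \<in> W}"
    using W(1) by (rule openin_continuous_map_preimage)
  have oneP: "(\<one>\<^bsub>G\<^esub>, \<one>\<^bsub>G\<^esub>) \<in> {P \<in> topspace (prod_topology T T). ?c P \<in> W}"
    using W(2) by (simp add: tsp group_commutator_def)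
  obtain U1 U2 where U: "openin T U1" "openin T U2" "\<one>\<^bsub>G\<^esub> \<in> U1" "\<one>\<^bsub>G\<^esub> \<in> U2"
      "U1 \<times> U2 \<subseteq> {P \<in> topspace (prod_topology T T). ?c P \<in> W}"
    using openin_prod_topology_alt[THEN iffD1, rule_format, OF opP oneP] by (elim exE conjE)
  show ?thesis
  proof
    show "openin T (U1 \<inter> U2)"
      using U(1,2) by (rule openin_Int)
    show "\<one>\<^bsub>G\<^esub> \<in> U1 \<inter> U2"
      using U(3,4) by simp
    fix u v assume "u \<in> U1 \<inter> U2" "v \<in> U1 \<inter> U2"
    then have "group_commutator G u v \<in> W"
      using U(5) by auto
    then show "group_commutator G u v \<noteq> z"
      using W(3) by blast
  qed
qed

text \<open>A coarser Hausdorff group topology \<open>T'\<close> coincides with \<open>T\<close> as soon as some \<open>T'\<close>-neighbourhood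
  \<open>U\<close> of the identity is contained in a \<open>T\<close>-compact set \<open>L\<close>: for \<open>h \<in> S\<close> with \<open>S\<close> \<open>T\<close>-open, the set
  \<open>hU - (hL - S)\<close> is a \<open>T'\<close>-open neighbourhood of \<open>h\<close> inside \<open>S\<close>, because \<open>hL - S\<close> is \<open>T\<close>-compact,
  hence \<open>T'\<close>-compact and \<open>T'\<close>-closed.\<close>

lemma coarser_group_topology_eq:
  assumes T: "group_topology G T" and T': "group_topology G T'" "Hausdorff_space T'"
    and coarser: "\<And>S. openin T' S \<Longrightarrow> openin T S"
    and U: "openin T' U" "\<one>\<^bsub>G\<^esub> \<in> U" and L: "compactin T L" "U \<subseteq> L"
  shows "T' = T"
proof -
  have tsp: "topspace T = carrier G" "topspace T' = carrier G"
    using T T' by (auto simp: group_topology_def)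
  have "continuous_map T T' id"
    unfolding continuous_map_def
  proof (intro conjI allI impI)
    show "id \<in> topspace T \<rightarrow> topspace T'"
      by (simp add: tsp)
    fix S assume "openin T' S"
    moreover have "{x \<in> topspace T. id x \<in> S} = S"
      using openin_subset[OF \<open>openin T' S\<close>] tsp by auto
    ultimately show "openin T {x \<in> topspace T. id x \<in> S}"
      using coarser by simp
  qed
  then have compact_closed: "closedin T' C" if "compactin T C" for C
    using compactin_imp_closedin[OF T'(2) image_compactin[OF that \<open>continuous_map T T' id\<close>]]
    by simp
  have "openin T' S" if S: "openin T S" for S
  proof (rule openin_subopen[THEN iffD2], intro ballI)
    fix h assume "h \<in> S"
    then have h: "h \<in> carrier G"
      using openin_subset[OF S] tsp by auto
    let ?hU = "(\<lambda>y. h \<otimes>\<^bsub>G\<^esub> y) ` U" and ?hL = "(\<lambda>y. h \<otimes>\<^bsub>G\<^esub> y) ` L"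
    have "continuous_map T T (\<lambda>y. h \<otimes>\<^bsub>G\<^esub> y)"
      using T h by (intro group_topology_mult_continuous) (auto simp: tsp)
    then have "compactin T ?hL"
      using L(1) by (rule image_compactin[rotated])
    then have "compactin T ((topspace T - S) \<inter> ?hL)"
      using S by (intro closed_Int_compactin) auto
    moreover have "(topspace T - S) \<inter> ?hL = ?hL - S"
      using compactin_subset_topspace[OF \<open>compactin T ?hL\<close>] by blast
    ultimately have "closedin T' (?hL - S)"
      using compact_closed by simp
    moreover have "openin T' ?hU"
      using T' h U(1) by (intro group_topology_translate_open) auto
    ultimately have V_open: "openin T' (?hU - (?hL - S))"
      by (intro openin_diff)
    have V_h: "h \<in> ?hU - (?hL - S)"
    proof -
      have "h = h \<otimes>\<^bsub>G\<^esub> \<one>\<^bsub>G\<^esub>"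
        using h T by (simp add: group_topology_def group.is_monoid monoid.r_one)
      then show ?thesis
        using U(2) \<open>h \<in> S\<close> by blast
    qed
    have V_sub: "?hU - (?hL - S) \<subseteq> S"
      using L(2) by blast
    show "\<exists>V. openin T' V \<and> h \<in> V \<and> V \<subseteq> S"
      using V_open V_h V_sub by metis
  qed
  then show ?thesis
    using coarser by (auto simp: topology_eq)
qed

lemma clopen_symdiff: "A \<in> clopens X \<Longrightarrow> B \<in> clopens X \<Longrightarrow> symdiff A B \<in> clopens X"
  unfolding clopens_def symdiff_def by (auto intro: closedin_Un openin_Un closedin_diff openin_diff)

lemma clopen_empty [simp]: "{} \<in> clopens X"
  unfolding clopens_def by auto

lemma symdiff_assoc: "symdiff (symdiff A B) C = symdiff A (symdiff B C)"
  unfolding symdiff_def by blast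

lemma symdiff_simps [simp]: "symdiff A A = {}" "symdiff {} A = A" "symdiff A {} = A"
  unfolding symdiff_def by blast+

lemma hom_symdiff:
  "f \<in> dual_hom X \<Longrightarrow> A \<in> clopens X \<Longrightarrow> B \<in> clopens X \<Longrightarrow> f (symdiff A B) = (f A \<noteq> f B)"
  unfolding dual_hom_def by blast

lemma hom_empty [simp]: "f \<in> dual_hom X \<Longrightarrow> f {} = False"
  using hom_symdiff[of f X "{}" "{}"] by simp

lemma hom_undefined: "f \<in> dual_hom X \<Longrightarrow> A \<notin> clopens X \<Longrightarrow> f A = undefined"
  unfolding dual_hom_def extensional_def by blast

lemma dual_add: "f \<in> dual_hom X \<Longrightarrow> g \<in> dual_hom X \<Longrightarrow> (\<lambda>A\<in>clopens X. f A \<noteq> g A) \<in> dual_hom X"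
  unfolding dual_hom_def using clopen_symdiff by (auto simp: extensional_def)

lemma dual_zero [simp]: "(\<lambda>A\<in>clopens X. False) \<in> dual_hom X"
  unfolding dual_hom_def using clopen_symdiff by (auto simp: extensional_def)

text \<open>For points \<open>p, q\<close>, the character \<open>A \<mapsto> [p \<in> A] + [q \<in> A]\<close>; these characters separate
  clopen sets from one another, which drives the finiteness argument below.\<close>

lemma dual_point_difference: "(\<lambda>A\<in>clopens X. (p \<in> A) \<noteq> (q \<in> A)) \<in> dual_hom X"
  unfolding dual_hom_def using clopen_symdiff by (auto simp: extensional_def symdiff_def)

lemma carrier_heis: "carrier (heis_group X) = UNIV \<times> clopens X \<times> dual_hom X"
  by (simp add: heis_group_def)

lemma mult_heis [simp]:
  "(a, x, f) \<otimes>\<^bsub>heis_group X\<^esub> (b, y, g) = ((a \<noteq> b) \<noteq> f y, symdiff x y, \<lambda>A\<in>clopens X. f A \<noteq> g A)"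
  by (simp add: heis_group_def)

lemma one_heis: "\<one>\<^bsub>heis_group X\<^esub> = (False, {}, \<lambda>A\<in>clopens X. False)"
  by (simp add: heis_group_def)

lemma group_heis: "group (heis_group X)"
proof (rule groupI)
  fix x y assume "x \<in> carrier (heis_group X)" "y \<in> carrier (heis_group X)"
  then show "x \<otimes>\<^bsub>heis_group X\<^esub> y \<in> carrier (heis_group X)"
    by (cases x; cases y) (auto simp: carrier_heis clopen_symdiff dual_add[simplified])
next
  fix x y z assume "x \<in> carrier (heis_group X)" "y \<in> carrier (heis_group X)" "z \<in> carrier (heis_group X)"
  then show "x \<otimes>\<^bsub>heis_group X\<^esub> y \<otimes>\<^bsub>heis_group X\<^esub> z = x \<otimes>\<^bsub>heis_group X\<^esub> (y \<otimes>\<^bsub>heis_group X\<^esub> z)"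
    by (cases x; cases y; cases z) (auto simp: carrier_heis clopen_symdiff symdiff_assoc hom_symdiff restrict_def)
next
  fix x assume "x \<in> carrier (heis_group X)"
  then show "\<one>\<^bsub>heis_group X\<^esub> \<otimes>\<^bsub>heis_group X\<^esub> x = x"
    by (cases x) (auto simp: carrier_heis one_heis restrict_def hom_undefined intro!: ext)
next
  fix x assume "x \<in> carrier (heis_group X)"
  then obtain a v f where x: "x = (a, v, f)" "v \<in> clopens X" "f \<in> dual_hom X"
    by (cases x) (auto simp: carrier_heis)
  then show "\<exists>y\<in>carrier (heis_group X). y \<otimes>\<^bsub>heis_group X\<^esub> x = \<one>\<^bsub>heis_group X\<^esub>"
    by (intro bexI[of _ "(a \<noteq> f v, v, f)"]) (auto simp: carrier_heis one_heis)
qed (simp add: carrier_heis one_heis)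

lemma inv_heis:
  "v \<in> clopens X \<Longrightarrow> f \<in> dual_hom X \<Longrightarrow> inv\<^bsub>heis_group X\<^esub> (a, v, f) = (a \<noteq> f v, v, f)"
  by (rule group.inv_equality[OF group_heis]) (auto simp: carrier_heis one_heis)

lemma commutator_heis:
  assumes "x \<in> clopens X" "y \<in> clopens X" "f \<in> dual_hom X" "g \<in> dual_hom X"
  shows "group_commutator (heis_group X) (a, x, f) (b, y, g) = (f y \<noteq> g x, {}, \<lambda>A\<in>clopens X. False)"
  using assms by (auto simp: group_commutator_def inv_heis symdiff_def hom_symdiff clopen_symdiff intro!: ext)

lemma topspace_dual [simp]: "topspace (dual_topology X) = dual_hom X"
  by (auto simp: dual_topology_def dual_hom_def PiE_def)

lemma topspace_heis: "topspace (heis_topology X) = carrier (heis_group X)"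
  by (simp add: heis_topology_def carrier_heis)

lemma hausdorff_heis: "Hausdorff_space (heis_topology X)"
  unfolding heis_topology_def dual_topology_def
  by (auto simp: Hausdorff_space_prod_topology Hausdorff_space_product_topology
      intro!: Hausdorff_space_subtopology)

lemma continuous_map_dual_iff:
  "continuous_map Z (dual_topology X) f \<longleftrightarrow>
     (\<forall>k\<in>clopens X. continuous_map Z (discrete_topology UNIV) (\<lambda>z. f z k)) \<and>
     f \<in> topspace Z \<rightarrow> dual_hom X"
  unfolding dual_topology_def continuous_map_in_subtopology continuous_map_componentwise
  by (auto simp: dual_hom_def)

lemma continuous_map_heis_iff:
  "continuous_map Z (heis_topology X) h \<longleftrightarrow>
     continuous_map Z (discrete_topology UNIV) (\<lambda>z. fst (h z)) \<and>
     continuous_map Z (discrete_topology (clopens X)) (\<lambda>z. fst (snd (h z))) \<and>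
     continuous_map Z (dual_topology X) (\<lambda>z. snd (snd (h z)))"
  unfolding heis_topology_def continuous_map_pairwise by (simp add: o_def)

lemma continuous_map_dual_eval:
  assumes "continuous_map Z (discrete_topology (clopens X)) x" "continuous_map Z (dual_topology X) f"
  shows "continuous_map Z (discrete_topology UNIV) (\<lambda>z. f z (x z))"
proof -
  let ?P = "product_topology (\<lambda>_. discrete_topology (UNIV::bool set)) (clopens X)"
  have "continuous_map Z ?P f"
    using assms(2) by (simp add: dual_topology_def continuous_map_in_subtopology)
  then have "continuous_map Z (prod_topology (discrete_topology (clopens X)) ?P) (\<lambda>z. (x z, f z))"
    using assms(1) by (rule continuous_map_pairedI[rotated])
  then have "continuous_map Z (discrete_topology UNIV) ((\<lambda>(i, g). g i) \<circ> (\<lambda>z. (x z, f z)))"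
    using continuous_map_eval_discrete by (rule continuous_map_compose)
  then show ?thesis
    by (simp add: o_def)
qed

lemma mult_heis_coordinates:
  "x \<otimes>\<^bsub>heis_group X\<^esub> y =
     ((fst x \<noteq> fst y) \<noteq> snd (snd x) (fst (snd y)), symdiff (fst (snd x)) (fst (snd y)),
      \<lambda>A\<in>clopens X. snd (snd x) A \<noteq> snd (snd y) A)"
  by (cases x; cases y) simp

lemma continuous_map_heis_mult:
  "continuous_map (prod_topology (heis_topology X) (heis_topology X)) (heis_topology X)
     (\<lambda>(x, y). x \<otimes>\<^bsub>heis_group X\<^esub> y)"
proof -
  let ?T = "heis_topology X"
  let ?Z = "prod_topology ?T ?T"
  have a: "continuous_map ?Z (discrete_topology UNIV) (\<lambda>P. fst (fst P))"
          "continuous_map ?Z (discrete_topology UNIV) (\<lambda>P. fst (snd P))"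
   and x: "continuous_map ?Z (discrete_topology (clopens X)) (\<lambda>P. fst (snd (fst P)))"
          "continuous_map ?Z (discrete_topology (clopens X)) (\<lambda>P. fst (snd (snd P)))"
   and f: "continuous_map ?Z (dual_topology X) (\<lambda>P. snd (snd (fst P)))"
          "continuous_map ?Z (dual_topology X) (\<lambda>P. snd (snd (snd P)))"
    using continuous_map_fst[of ?T ?T] continuous_map_snd[of ?T ?T]
    unfolding continuous_map_heis_iff by blast+
  have "continuous_map ?Z (discrete_topology UNIV) (\<lambda>P. fst (fst P) \<noteq> fst (snd P))"
    using a by (rule continuous_map_discrete_binop[where h = "(\<noteq>)"]) simp
  then have "continuous_map ?Z (discrete_topology UNIV)
          (\<lambda>P. (fst (fst P) \<noteq> fst (snd P)) \<noteq> snd (snd (fst P)) (fst (snd (snd P))))"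
    using continuous_map_dual_eval[OF x(2) f(1)]
    by (rule continuous_map_discrete_binop[where h = "(\<noteq>)"]) simp
  moreover have "continuous_map ?Z (discrete_topology (clopens X))
          (\<lambda>P. symdiff (fst (snd (fst P))) (fst (snd (snd P))))"
    using x clopen_symdiff by (rule continuous_map_discrete_binop[where h = symdiff])
  moreover have "continuous_map ?Z (discrete_topology UNIV) (\<lambda>P. snd (snd (fst P)) k \<noteq> snd (snd (snd P)) k)"
    if "k \<in> clopens X" for k
    using f that unfolding continuous_map_dual_iff
    by (intro continuous_map_discrete_binop[where h = "(\<noteq>)"]) auto
  moreover have "(\<lambda>A\<in>clopens X. snd (snd (fst P)) A \<noteq> snd (snd (snd P)) A) \<in> dual_hom X"
    if "P \<in> topspace ?Z" for P
    using that by (intro dual_add) (auto simp: topspace_heis carrier_heis mem_Times_iff)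
  ultimately show ?thesis
    unfolding continuous_map_heis_iff split_beta mult_heis_coordinates continuous_map_dual_iff
    by auto
qed

lemma continuous_map_heis_inv:
  "continuous_map (heis_topology X) (heis_topology X) (\<lambda>x. inv\<^bsub>heis_group X\<^esub> x)"
proof -
  let ?T = "heis_topology X"
  have coords: "continuous_map ?T (discrete_topology UNIV) fst"
     "continuous_map ?T (discrete_topology (clopens X)) (\<lambda>z. fst (snd z))"
     "continuous_map ?T (dual_topology X) (\<lambda>z. snd (snd z))"
    using continuous_map_id[of ?T] unfolding continuous_map_heis_iff id_def by auto
  have "continuous_map ?T ?T (\<lambda>z. (fst z \<noteq> snd (snd z) (fst (snd z)), fst (snd z), snd (snd z)))"
    unfolding continuous_map_heis_iff
    using coords continuous_map_discrete_binop[OF coords(1) continuous_map_dual_eval[OF coords(2,3)],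
        where h = "(\<noteq>)"]
    by simp
  then show ?thesis
    by (rule continuous_map_eq) (auto simp: topspace_heis carrier_heis inv_heis)
qed

lemma group_topology_heis: "group_topology (heis_group X) (heis_topology X)"
  unfolding group_topology_def
  using group_heis topspace_heis continuous_map_heis_mult continuous_map_heis_inv by blast

definition annihilator :: "'a topology \<Rightarrow> 'a set set \<Rightarrow> ('a set \<Rightarrow> bool) set" where
  "annihilator X K = {g \<in> dual_hom X. \<forall>k\<in>K. g k = False}"

lemma openin_annihilator:
  assumes "finite K" "K \<subseteq> clopens X"
  shows "openin (dual_topology X) (annihilator X K)"
proof -
  let ?D = "dual_topology X"
  have "openin ?D {g \<in> topspace ?D. g k \<in> {False}}" if "k \<in> K" for k
  proof -
    have "continuous_map ?D (discrete_topology UNIV) (\<lambda>g. g k)"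
      using continuous_map_id[of ?D] that assms(2) unfolding continuous_map_dual_iff by auto
    then show ?thesis
      by (rule openin_continuous_map_preimage) simp
  qed
  then have "openin ?D ((\<Inter>k\<in>K. {g \<in> topspace ?D. g k \<in> {False}}) \<inter> topspace ?D)"
    by (rule openin_INT[OF assms(1)])
  moreover have "(\<Inter>k\<in>K. {g \<in> topspace ?D. g k \<in> {False}}) \<inter> topspace ?D = annihilator X K"
    by (auto simp: annihilator_def)
  ultimately show ?thesis
    by simp
qed

lemma annihilator_in_nbhd:
  assumes "openin (dual_topology X) W" "(\<lambda>A\<in>clopens X. False) \<in> W"
  obtains K where "finite K" "K \<subseteq> clopens X" "annihilator X K \<subseteq> W"
proof -
  let ?P = "product_topology (\<lambda>_. discrete_topology (UNIV::bool set)) (clopens X)"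
  let ?z = "\<lambda>A\<in>clopens X. False"
  obtain W' where W': "openin ?P W'" "W = W' \<inter> dual_hom X"
    using assms(1) unfolding dual_topology_def openin_subtopology by (elim exE conjE)
  then obtain B where B: "finite {i \<in> clopens X. B i \<noteq> UNIV}" "?z \<in> Pi\<^sub>E (clopens X) B"
      "Pi\<^sub>E (clopens X) B \<subseteq> W'"
    using assms(2) unfolding openin_product_topology_alt by auto
  define K where "K = {i \<in> clopens X. B i \<noteq> UNIV}"
  have "annihilator X K \<subseteq> Pi\<^sub>E (clopens X) B"
  proof (intro subsetI PiE_I)
    fix g assume g: "g \<in> annihilator X K"
    fix i assume i: "i \<in> clopens X"
    show "g i \<in> B i"
    proof (cases "i \<in> K")
      case True
      then show ?thesis
        using g i PiE_mem[OF B(2) i] by (simp add: annihilator_def)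
    qed (use i in \<open>simp add: K_def\<close>)
  next
    fix g i assume "g \<in> annihilator X K" "i \<notin> clopens X"
    then show "g i = undefined"
      by (auto simp: annihilator_def hom_undefined)
  qed
  then have "annihilator X K \<subseteq> W"
    using B(3) W'(2) by (auto simp: annihilator_def)
  moreover have "finite K" "K \<subseteq> clopens X"
    using B(1) by (auto simp: K_def)
  ultimately show ?thesis
    using that by blast
qed

definition annihilator_subgroup ::
    "'a topology \<Rightarrow> 'a set set \<Rightarrow> (bool \<times> 'a set \<times> ('a set \<Rightarrow> bool)) set" where
  "annihilator_subgroup X K = {False} \<times> {{}} \<times> annihilator X K"

lemma heis_nbhd_one:
  assumes "openin (heis_topology X) U" "\<one>\<^bsub>heis_group X\<^esub> \<in> U"
  obtains K where "finite K" "K \<subseteq> clopens X" "annihilator_subgroup X K \<subseteq> U"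
proof -
  let ?D = "dual_topology X"
  have "continuous_map ?D (heis_topology X) (\<lambda>g. (False, {}, g))"
    unfolding continuous_map_heis_iff by simp
  then have "openin ?D {g \<in> topspace ?D. (False, {}, g) \<in> U}"
    using assms(1) by (rule openin_continuous_map_preimage)
  moreover have "(\<lambda>A\<in>clopens X. False) \<in> {g \<in> topspace ?D. (False, {}, g) \<in> U}"
    using assms(2) by (simp add: one_heis)
  ultimately obtain K where K: "finite K" "K \<subseteq> clopens X"
      "annihilator X K \<subseteq> {g \<in> topspace ?D. (False, {}, g) \<in> U}"
    by (rule annihilator_in_nbhd)
  then have "annihilator_subgroup X K \<subseteq> U"
    by (auto simp: annihilator_subgroup_def)
  with K(1,2) show ?thesis
    by (rule that)
qed

lemma subgroup_annihilator:
  assumes "K \<subseteq> clopens X"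
  shows "subgroup (annihilator_subgroup X K) (heis_group X)"
proof (rule group.subgroupI[OF group_heis])
  show "annihilator_subgroup X K \<subseteq> carrier (heis_group X)"
    by (auto simp: annihilator_subgroup_def annihilator_def carrier_heis)
  have "(False, {}, \<lambda>A\<in>clopens X. False) \<in> annihilator_subgroup X K"
    using assms by (auto simp: annihilator_subgroup_def annihilator_def)
  then show "annihilator_subgroup X K \<noteq> {}"
    by blast
next
  fix x assume "x \<in> annihilator_subgroup X K"
  then show "inv\<^bsub>heis_group X\<^esub> x \<in> annihilator_subgroup X K"
    by (auto simp: annihilator_subgroup_def annihilator_def inv_heis)
next
  fix x y assume "x \<in> annihilator_subgroup X K" "y \<in> annihilator_subgroup X K"
  then show "x \<otimes>\<^bsub>heis_group X\<^esub> y \<in> annihilator_subgroup X K"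
    using assms by (auto simp: annihilator_subgroup_def annihilator_def dual_add[simplified])
qed

lemma non_archimedean_heis: "non_archimedean_group (heis_group X) (heis_topology X)"
  unfolding non_archimedean_group_def
proof (intro conjI allI impI group_topology_heis)
  fix U assume "openin (heis_topology X) U \<and> \<one>\<^bsub>heis_group X\<^esub> \<in> U"
  then obtain K where K: "finite K" "K \<subseteq> clopens X" "annihilator_subgroup X K \<subseteq> U"
    by (elim conjE heis_nbhd_one)
  have "openin (heis_topology X) (annihilator_subgroup X K)"
    using openin_annihilator[OF K(1,2)]
    by (simp add: annihilator_subgroup_def heis_topology_def openin_prod_Times_iff)
  then show "\<exists>H. subgroup H (heis_group X) \<and> openin (heis_topology X) H \<and> H \<subseteq> U"
    using subgroup_annihilator[OF K(2)] K(3) by metis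
qed

text \<open>\<open>V\<^sup>*\<close> is closed in \<open>\<int>\<^sub>2\<^sup>V\<close>: the homomorphism identities involve finitely many coordinates each.\<close>

lemma closedin_dual_hom:
  "closedin (product_topology (\<lambda>_. discrete_topology (UNIV::bool set)) (clopens X)) (dual_hom X)"
proof -
  let ?P = "product_topology (\<lambda>_. discrete_topology (UNIV::bool set)) (clopens X)"
  let ?H = "\<lambda>A B. {f \<in> topspace ?P. (f (symdiff A B) = (f A \<noteq> f B)) \<in> {True}}"
  have proj: "continuous_map ?P (discrete_topology UNIV) (\<lambda>f. f C)" if "C \<in> clopens X" for C
    using that by (rule continuous_map_product_projection)
  have "closedin ?P (?H A B)" if A: "A \<in> clopens X" and B: "B \<in> clopens X" for A B
  proof -
    have "continuous_map ?P (discrete_topology UNIV) (\<lambda>f. f (symdiff A B) = (f A \<noteq> f B))"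
      using proj[OF clopen_symdiff[OF A B]]
        continuous_map_discrete_binop[OF proj[OF A] proj[OF B], where h = "(\<noteq>)"]
      by (rule continuous_map_discrete_binop[where h = "(=)"]) auto
    then show ?thesis
      by (rule closedin_continuous_map_preimage) simp
  qed
  then have "closedin ?P (topspace ?P \<inter> (\<Inter>A\<in>clopens X. \<Inter>B\<in>clopens X. ?H A B))"
    using clopen_empty by (intro closedin_Int closedin_topspace closedin_INT) blast+
  moreover have "topspace ?P \<inter> (\<Inter>A\<in>clopens X. \<Inter>B\<in>clopens X. ?H A B) = dual_hom X"
    by (auto simp: dual_hom_def PiE_def)
  ultimately show ?thesis
    by simp
qed

lemma compactin_heis_slab:
  assumes "finite F" "F \<subseteq> clopens X"
  shows "compactin (heis_topology X) (UNIV \<times> F \<times> dual_hom X)"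
proof -
  let ?P = "product_topology (\<lambda>_. discrete_topology (UNIV::bool set)) (clopens X)"
  have "compact_space ?P"
    by (simp add: compact_space_product_topology compact_space_discrete_topology)
  then have "compactin ?P (dual_hom X)"
    using closedin_dual_hom by (rule closedin_compact_space)
  then have "compactin (dual_topology X) (dual_hom X)"
    by (simp add: dual_topology_def compactin_subtopology)
  then show ?thesis
    using assms by (simp add: heis_topology_def compactin_Times compactin_discrete_topology)
qed

text \<open>The subsets of \<open>X\<close> determined by the membership pattern of their points in the sets of
  \<open>K\<close>, i.e. the unions of atoms of the Boolean algebra generated by \<open>K\<close>; finitely many if \<open>K\<close> is finite.\<close>

definition saturated_sets :: "'a topology \<Rightarrow> 'a set set \<Rightarrow> 'a set set" where
  "saturated_sets X K = (\<lambda>S. {p \<in> topspace X. {k \<in> K. p \<in> k} \<in> S}) ` Pow (Pow K)"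

lemma finite_saturated_sets: "finite K \<Longrightarrow> finite (saturated_sets X K)"
  by (simp add: saturated_sets_def)

text \<open>A clopen set killed by every character vanishing on \<open>K\<close> is \<open>K\<close>-saturated: if \<open>p\<close> and \<open>q\<close> have
  the same pattern on \<open>K\<close>, the character \<open>[p \<in> -] + [q \<in> -]\<close> vanishes on \<open>K\<close>, hence on \<open>x\<close>.\<close>

lemma clopen_saturated:
  assumes x: "x \<in> clopens X" and K: "K \<subseteq> clopens X"
    and annihilated: "\<And>g. g \<in> annihilator X K \<Longrightarrow> g x = False"
  shows "x \<in> saturated_sets X K"
proof -
  let ?type = "\<lambda>p. {k \<in> K. p \<in> k}"
  have same_type: "p \<in> x" if q: "q \<in> x" and type: "?type p = ?type q" for p q
  proof -
    let ?g = "\<lambda>A\<in>clopens X. (p \<in> A) \<noteq> (q \<in> A)"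
    have "?g \<in> annihilator X K"
      using dual_point_difference[where p = p and q = q] type K by (auto simp: annihilator_def)
    then have "?g x = False"
      by (rule annihilated)
    then show ?thesis
      using q x by simp
  qed
  have "x \<subseteq> topspace X"
    using x by (auto simp: clopens_def dest: openin_subset)
  then have "x = {p \<in> topspace X. ?type p \<in> ?type ` x}"
    using same_type by blast
  moreover have "?type ` x \<in> Pow (Pow K)"
    by auto
  ultimately show ?thesis
    unfolding saturated_sets_def by blast
qed

lemma commuting_nbhd_bounded:
  assumes U: "U \<subseteq> carrier (heis_group X)" "annihilator_subgroup X K \<subseteq> U" and K: "K \<subseteq> clopens X"
    and comm: "\<And>a x f b y g. (a, x, f) \<in> U \<Longrightarrow> (b, y, g) \<in> U \<Longrightarrow> f y = g x"
  shows "U \<subseteq> UNIV \<times> (saturated_sets X K \<inter> clopens X) \<times> dual_hom X"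
proof
  fix u assume "u \<in> U"
  then obtain a x f where u: "u = (a, x, f)" "x \<in> clopens X" "f \<in> dual_hom X"
    using U(1) by (cases u) (auto simp: carrier_heis)
  have "g x = False" if "g \<in> annihilator X K" for g
  proof -
    have "(False, {}, g) \<in> U"
      using that U(2) by (auto simp: annihilator_subgroup_def)
    then have "f {} = g x"
      using comm \<open>u \<in> U\<close> u(1) by blast
    then show ?thesis
      using u(3) by simp
  qed
  then have "x \<in> saturated_sets X K"
    by (rule clopen_saturated[OF u(2) K])
  then show "u \<in> UNIV \<times> (saturated_sets X K \<inter> clopens X) \<times> dual_hom X"
    using u by simp
qed

lemma minimal_heis:
  assumes T': "group_topology (heis_group X) T'" "Hausdorff_space T'"
    and coarser: "\<And>S. openin T' S \<Longrightarrow> openin (heis_topology X) S"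
  shows "T' = heis_topology X"
proof -
  let ?G = "heis_group X"
  let ?z = "(True, {}, \<lambda>A\<in>clopens X. False)"
  have z: "?z \<in> carrier ?G" "?z \<noteq> \<one>\<^bsub>?G\<^esub>"
    by (auto simp: carrier_heis one_heis)
  obtain U where U: "openin T' U" "\<one>\<^bsub>?G\<^esub> \<in> U" and small:
      "\<And>u v. u \<in> U \<Longrightarrow> v \<in> U \<Longrightarrow> group_commutator ?G u v \<noteq> ?z"
    using small_commutators[OF T' z] by blast
  have U_carrier: "U \<subseteq> carrier ?G"
    using openin_subset[OF U(1)] T'(1) by (simp add: group_topology_def)
  obtain K where K: "finite K" "K \<subseteq> clopens X" "annihilator_subgroup X K \<subseteq> U"
    by (rule heis_nbhd_one[OF coarser[OF U(1)] U(2)])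
  have comm: "f y = g x" if "(a, x, f) \<in> U" "(b, y, g) \<in> U" for a x f b y g
  proof -
    have "x \<in> clopens X" "y \<in> clopens X" "f \<in> dual_hom X" "g \<in> dual_hom X"
      using that U_carrier by (auto simp: carrier_heis)
    then show ?thesis
      using small[OF that] commutator_heis by fastforce
  qed
  have "U \<subseteq> UNIV \<times> (saturated_sets X K \<inter> clopens X) \<times> dual_hom X"
    using U_carrier K(3,2) comm by (rule commuting_nbhd_bounded)
  moreover have "compactin (heis_topology X) (UNIV \<times> (saturated_sets X K \<inter> clopens X) \<times> dual_hom X)"
    using K(1) by (intro compactin_heis_slab) (auto simp: finite_saturated_sets)
  ultimately show ?thesis
    using coarser_group_topology_eq[OF group_topology_heis T' coarser U] by blast
qed

theorem theorem4p1:
  fixes X :: "'a topology"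
  assumes "stone_space X"
  shows "minimal_group (heis_group X) (heis_topology X) \<and>
         non_archimedean_group (heis_group X) (heis_topology X)"
proof
  show "minimal_group (heis_group X) (heis_topology X)"
    unfolding minimal_group_def using group_topology_heis hausdorff_heis minimal_heis by blast
  show "non_archimedean_group (heis_group X) (heis_topology X)"
    by (rule non_archimedean_heis)
qed

end
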